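(* Let $1\le p<\infty$ and let $d_{w,p}$ be a Lorentz sequence space. The set $J^j$ of all operators $T\in L(d_{w,p})$ which can be written as $T=AjB$ with $A\in L(d_{w,p})$ and $B\in L(d_{w,p},\ell_p)$ is a (two-sided) ideal in $L(d_{w,p})$.
   Context: Let $1\le p<\infty$ and let $w=(w_n)$ be a real sequence with $w_1=1$, $w_n\downarrow 0$ and $\sum_n w_n=\infty$. The Lorentz sequence space $d_{w,p}$ is the Banach space of all $x=(x_n)\in c_0$ with $\|x\|_{d_{w,p}}=\big(\sum_{n}w_n (x^*_n)^p\big)^{1/p}<\infty$, where $(x^*_n)$ is the non-increasing rearrangement of $(|x_n|)$. Let $(e_n)$ be the unit vector basis of $d_{w,p}$ and $(f_n)$ that of $\ell_p$. The formal identity $j\colon \ell_p\to d_{w,p}$ is the bounded operator with $j(f_n)=e_n$ (so $j$ maps a sequence to the same sequence). An ideal is a linear subspace $J$ with $ATB\in J$ whenever $T\in J$ and $A,B\in L(d_{w,p})$. *)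

theory Defs
  imports "HOL-Analysis.Analysis"
begin

text \<open>Sequences are modelled as functions nat => real, indexed from 0
 (so the paper's w_1 is w 0 here). Spaces are given by a carrier set and a norm.\<close>

text \<open>Non-increasing rearrangement of (|x_n|) (0-indexed): the n-th entry is
 the least s >= 0 such that at most n entries satisfy |x_k| > s.\<close>
definition dec_rearr :: "(nat \<Rightarrow> real) \<Rightarrow> nat \<Rightarrow> real" where
  "dec_rearr x n = Inf {s. 0 \<le> s \<and> finite {k. \<bar>x k\<bar> > s} \<and> card {k. \<bar>x k\<bar> > s} \<le> n}"

definition lorentz_space :: "(nat \<Rightarrow> real) \<Rightarrow> real \<Rightarrow> (nat \<Rightarrow> real) set" where
  "lorentz_space w p = {x. x \<longlonglongrightarrow> 0 \<and> summable (\<lambda>n. w n * dec_rearr x n powr p)}"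

definition lorentz_norm :: "(nat \<Rightarrow> real) \<Rightarrow> real \<Rightarrow> (nat \<Rightarrow> real) \<Rightarrow> real" where
  "lorentz_norm w p x = (\<Sum>n. w n * dec_rearr x n powr p) powr (1 / p)"

definition lp_space :: "real \<Rightarrow> (nat \<Rightarrow> real) set" where
  "lp_space p = {x. summable (\<lambda>n. \<bar>x n\<bar> powr p)}"

definition lp_norm :: "real \<Rightarrow> (nat \<Rightarrow> real) \<Rightarrow> real" where
  "lp_norm p x = (\<Sum>n. \<bar>x n\<bar> powr p) powr (1 / p)"

text \<open>Bounded linear operators between (D1,N1) and (D2,N2), made extensional:
 an operator is 0 outside its domain, so equality of operators is equality on D1.\<close>
definition bounded_ops ::
  "(nat \<Rightarrow> real) set \<Rightarrow> ((nat \<Rightarrow> real) \<Rightarrow> real) \<Rightarrow> (nat \<Rightarrow> real) set \<Rightarrow> ((nat \<Rightarrow> real) \<Rightarrow> real)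
   \<Rightarrow> ((nat \<Rightarrow> real) \<Rightarrow> (nat \<Rightarrow> real)) set" where
  "bounded_ops D1 N1 D2 N2 = {T.
     (\<forall>x\<in>D1. T x \<in> D2) \<and>
     (\<forall>x\<in>D1. \<forall>y\<in>D1. T (\<lambda>n. x n + y n) = (\<lambda>n. T x n + T y n)) \<and>
     (\<forall>c. \<forall>x\<in>D1. T (\<lambda>n. c * x n) = (\<lambda>n. c * T x n)) \<and>
     (\<exists>C. \<forall>x\<in>D1. N2 (T x) \<le> C * N1 x) \<and>
     (\<forall>x. x \<notin> D1 \<longrightarrow> T x = (\<lambda>n. 0))}"

definition formal_identity :: "real \<Rightarrow> (nat \<Rightarrow> real) \<Rightarrow> (nat \<Rightarrow> real)" where
  "formal_identity p x = (if x \<in> lp_space p then x else (\<lambda>n. 0))"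

definition is_operator_ideal ::
  "(nat \<Rightarrow> real) set \<Rightarrow> ((nat \<Rightarrow> real) \<Rightarrow> real) \<Rightarrow> ((nat \<Rightarrow> real) \<Rightarrow> (nat \<Rightarrow> real)) set \<Rightarrow> bool" where
  "is_operator_ideal D N J \<longleftrightarrow>
     J \<subseteq> bounded_ops D N D N \<and>
     (\<lambda>x n. 0) \<in> J \<and>
     (\<forall>S\<in>J. \<forall>T\<in>J. (\<lambda>x n. S x n + T x n) \<in> J) \<and>
     (\<forall>c. \<forall>T\<in>J. (\<lambda>x n. c * T x n) \<in> J) \<and>
     (\<forall>T\<in>J. \<forall>A\<in>bounded_ops D N D N. \<forall>B\<in>bounded_ops D N D N. (\<lambda>x. A (T (B x))) \<in> J)"

definition J_j :: "(nat \<Rightarrow> real) \<Rightarrow> real \<Rightarrow> ((nat \<Rightarrow> real) \<Rightarrow> (nat \<Rightarrow> real)) set" where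
  "J_j w p = {T. \<exists>A B.
      A \<in> bounded_ops (lorentz_space w p) (lorentz_norm w p) (lorentz_space w p) (lorentz_norm w p) \<and>
      B \<in> bounded_ops (lorentz_space w p) (lorentz_norm w p) (lp_space p) (lp_norm p) \<and>
      T = (\<lambda>x. A (formal_identity p (B x)))}"

end

theory Submission
  imports Defs
begin

text \<open>Because B maps into l_p, the formal identity in A j B acts as the identity, so J^j is
the set of composites A B with A bounded on d_{w,p} and B bounded from d_{w,p} to l_p; these
are bounded on d_{w,p} since l_p embeds contractively into d_{w,p} (w_n \<le> 1, and the first N
terms of (y^*_n)^p are dominated by |y_k|^p summed over N suitable indices k). Composition on
either side keeps the form A B. For sums, A_1 B_1 + A_2 B_2 = A B, where B x interleaves
B_1 x and B_2 x and A z = A_1 (z_{2k})_k + A_2 (z_{2k+1})_k; A is bounded because d_{w,p} is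
stable under subsequences and under addition, the latter by (x+y)^*_{2n} \<le> x^*_n + y^*_n
together with w_m \<le> w_{m div 2}.\<close>

section \<open>Non-increasing rearrangement\<close>

definition rearr_levels :: "(nat \<Rightarrow> real) \<Rightarrow> nat \<Rightarrow> real set" where
  "rearr_levels x n = {s. 0 \<le> s \<and> finite {k. \<bar>x k\<bar> > s} \<and> card {k. \<bar>x k\<bar> > s} \<le> n}"

lemma dec_rearr_eq_Inf: "dec_rearr x n = Inf (rearr_levels x n)"
  by (simp add: dec_rearr_def rearr_levels_def)

lemma rearr_levels_nonempty:
  assumes "Bseq x" shows "rearr_levels x n \<noteq> {}"
proof -
  obtain K where K: "\<And>k. \<bar>x k\<bar> \<le> K" using assms by (auto simp: Bseq_def)
  have empty: "{k. \<bar>x k\<bar> > max K 0} = {}" using K by (auto simp: not_less)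
  have "max K 0 \<in> rearr_levels x n" unfolding rearr_levels_def mem_Collect_eq empty by simp
  then show ?thesis by blast
qed

lemma bdd_below_rearr_levels: "bdd_below (rearr_levels x n)"
  by (rule bdd_belowI[of _ 0]) (auto simp: rearr_levels_def)

lemma dec_rearr_le: "s \<in> rearr_levels x n \<Longrightarrow> dec_rearr x n \<le> s"
  unfolding dec_rearr_eq_Inf by (rule cInf_lower[OF _ bdd_below_rearr_levels])

lemma dec_rearr_nonneg: "Bseq x \<Longrightarrow> 0 \<le> dec_rearr x n"
  unfolding dec_rearr_eq_Inf
  by (rule cInf_greatest[OF rearr_levels_nonempty]) (auto simp: rearr_levels_def)

lemma rearr_levels_upward:
  assumes "s \<in> rearr_levels x n" "s \<le> t" shows "t \<in> rearr_levels x n"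
proof -
  have sub: "{k. \<bar>x k\<bar> > t} \<subseteq> {k. \<bar>x k\<bar> > s}" using assms(2) by auto
  have fin: "finite {k. \<bar>x k\<bar> > s}" using assms(1) by (simp add: rearr_levels_def)
  show ?thesis using assms finite_subset[OF sub fin] card_mono[OF fin sub]
    by (auto simp: rearr_levels_def)
qed

lemma dec_rearr_add_pos_in_levels:
  assumes "Bseq x" "e > 0" shows "dec_rearr x n + e \<in> rearr_levels x n"
proof -
  have "Inf (rearr_levels x n) < Inf (rearr_levels x n) + e" using assms by simp
  then obtain s where "s \<in> rearr_levels x n" "s < Inf (rearr_levels x n) + e"
    using cInf_lessD[OF rearr_levels_nonempty[OF assms(1)]] by blast
  then show ?thesis by (auto simp: dec_rearr_eq_Inf intro: rearr_levels_upward)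
qed

lemma dec_rearr_Suc_le:
  assumes "Bseq x" shows "dec_rearr x (Suc n) \<le> dec_rearr x n"
proof (rule field_le_epsilon)
  fix e :: real assume "e > 0"
  then have "dec_rearr x n + e \<in> rearr_levels x n" by (rule dec_rearr_add_pos_in_levels[OF assms])
  then have "dec_rearr x n + e \<in> rearr_levels x (Suc n)" by (auto simp: rearr_levels_def)
  then show "dec_rearr x (Suc n) \<le> dec_rearr x n + e" by (rule dec_rearr_le)
qed

lemma dec_rearr_antimono:
  assumes "Bseq x" "m \<le> n" shows "dec_rearr x n \<le> dec_rearr x m"
  using assms(2)
  by (induction rule: dec_induct) (auto intro: order.trans[OF dec_rearr_Suc_le[OF assms(1)]])

lemma dec_rearr_zero: "dec_rearr (\<lambda>n. 0) n = 0"
proof -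
  have "0 \<in> rearr_levels (\<lambda>n. 0) n" by (simp add: rearr_levels_def)
  then show ?thesis
    using dec_rearr_le dec_rearr_nonneg[of "\<lambda>n. 0" n] by (force simp: Bseq_def)
qed

lemma dec_rearr_cmult_le:
  assumes "Bseq x" shows "dec_rearr (\<lambda>k. c * x k) n \<le> \<bar>c\<bar> * dec_rearr x n"
proof (cases "c = 0")
  case True
  then show ?thesis using dec_rearr_zero by simp
next
  case False
  show ?thesis
  proof (rule field_le_epsilon)
    fix e :: real assume "e > 0"
    then have "dec_rearr x n + e / \<bar>c\<bar> \<in> rearr_levels x n"
      using dec_rearr_add_pos_in_levels[OF assms] False by simp
    moreover have "{k. \<bar>c * x k\<bar> > \<bar>c\<bar> * s} = {k. \<bar>x k\<bar> > s}" for s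
      using False by (auto simp: abs_mult)
    ultimately have "\<bar>c\<bar> * (dec_rearr x n + e / \<bar>c\<bar>) \<in> rearr_levels (\<lambda>k. c * x k) n"
      by (auto simp: rearr_levels_def)
    moreover have "\<bar>c\<bar> * (dec_rearr x n + e / \<bar>c\<bar>) = \<bar>c\<bar> * dec_rearr x n + e"
      using False by (simp add: field_simps)
    ultimately show "dec_rearr (\<lambda>k. c * x k) n \<le> \<bar>c\<bar> * dec_rearr x n + e"
      using dec_rearr_le by metis
  qed
qed

lemma dec_rearr_add_le:
  assumes "Bseq x" "Bseq y"
  shows "dec_rearr (\<lambda>k. x k + y k) (2 * n) \<le> dec_rearr x n + dec_rearr y n"
proof (rule field_le_epsilon)
  fix e :: real assume e: "e > 0"
  define a where "a = dec_rearr x n + e/2"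
  define b where "b = dec_rearr y n + e/2"
  have a: "finite {k. \<bar>x k\<bar> > a}" "card {k. \<bar>x k\<bar> > a} \<le> n" "0 \<le> a"
    using dec_rearr_add_pos_in_levels[OF assms(1)] e by (auto simp: a_def rearr_levels_def)
  have b: "finite {k. \<bar>y k\<bar> > b}" "card {k. \<bar>y k\<bar> > b} \<le> n" "0 \<le> b"
    using dec_rearr_add_pos_in_levels[OF assms(2)] e by (auto simp: b_def rearr_levels_def)
  have sub: "{k. \<bar>x k + y k\<bar> > a + b} \<subseteq> {k. \<bar>x k\<bar> > a} \<union> {k. \<bar>y k\<bar> > b}" by auto
  have fin: "finite ({k. \<bar>x k\<bar> > a} \<union> {k. \<bar>y k\<bar> > b})" using a b by simp
  have "card {k. \<bar>x k + y k\<bar> > a + b} \<le> card ({k. \<bar>x k\<bar> > a} \<union> {k. \<bar>y k\<bar> > b})"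
    by (rule card_mono[OF fin sub])
  also have "\<dots> \<le> 2 * n" using card_Un_le[of "{k. \<bar>x k\<bar> > a}" "{k. \<bar>y k\<bar> > b}"] a b by linarith
  finally have "a + b \<in> rearr_levels (\<lambda>k. x k + y k) (2 * n)"
    using finite_subset[OF sub fin] a b by (simp add: rearr_levels_def)
  then show "dec_rearr (\<lambda>k. x k + y k) (2 * n) \<le> dec_rearr x n + dec_rearr y n + e"
    using dec_rearr_le a_def b_def by fastforce
qed

lemma dec_rearr_reindex_le:
  assumes "Bseq x" "inj g" shows "dec_rearr (\<lambda>k. x (g k)) n \<le> dec_rearr x n"
proof (rule field_le_epsilon)
  fix e :: real assume e: "e > 0"
  define s where "s = dec_rearr x n + e"
  have s: "finite {k. \<bar>x k\<bar> > s}" "card {k. \<bar>x k\<bar> > s} \<le> n" "0 \<le> s"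
    using dec_rearr_add_pos_in_levels[OF assms(1) e] by (auto simp: s_def rearr_levels_def)
  have "{k. \<bar>x (g k)\<bar> > s} = g -` {k. \<bar>x k\<bar> > s}" by auto
  then have "finite {k. \<bar>x (g k)\<bar> > s}" using finite_vimageI[OF s(1) assms(2)] by simp
  moreover have "card {k. \<bar>x (g k)\<bar> > s} \<le> card {k. \<bar>x k\<bar> > s}"
    by (rule card_inj_on_le[of g, OF _ _ s(1)]) (use assms(2) in \<open>auto simp: inj_on_def\<close>)
  ultimately have "s \<in> rearr_levels (\<lambda>k. x (g k)) n"
    using s by (simp add: rearr_levels_def)
  then show "dec_rearr (\<lambda>k. x (g k)) n \<le> dec_rearr x n + e" using dec_rearr_le s_def by blast
qed

lemma finite_abs_gt_of_tendsto_zero: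
  fixes y :: "nat \<Rightarrow> real"
  assumes "y \<longlonglongrightarrow> 0" "s > 0" shows "finite {k. \<bar>y k\<bar> > s}"
proof -
  obtain N where "\<And>k. k \<ge> N \<Longrightarrow> \<bar>y k\<bar> < s"
    using LIMSEQ_D[OF assms] by auto
  then have "{k. \<bar>y k\<bar> > s} \<subseteq> {..<N}" by (metis lessThan_iff mem_Collect_eq not_le order.asym subsetI)
  then show ?thesis using finite_subset by blast
qed

lemma less_card_abs_ge_dec_rearr:
  assumes y: "y \<longlonglongrightarrow> 0" and pos: "dec_rearr y n > 0"
  shows "n < card {k. dec_rearr y n \<le> \<bar>y k\<bar>}"
proof -
  define d where "d = dec_rearr y n"
  have "d > 0" using pos d_def by simp
  define F where "F = {k. \<bar>y k\<bar> > d/2}"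
  have "finite F" unfolding F_def using finite_abs_gt_of_tendsto_zero[OF y, of "d/2"] \<open>d > 0\<close> by simp
  \<comment> \<open>Max V is the last level below d at which the set of entries exceeding it can still shrink\<close>
  define V where "V = insert (d/2) ((\<lambda>k. \<bar>y k\<bar>) ` {k\<in>F. \<bar>y k\<bar> < d})"
  have V: "finite V" "V \<noteq> {}" using \<open>finite F\<close> by (auto simp: V_def)
  define s where "s = Max V"
  have "s < d" using V \<open>d > 0\<close> by (simp add: s_def Max_less_iff V_def)
  have "d/2 \<le> s" unfolding s_def by (rule Max_ge[OF V(1)]) (simp add: V_def)
  have eq: "{k. \<bar>y k\<bar> > s} = {k. d \<le> \<bar>y k\<bar>}"
  proof (intro set_eqI iffI; simp)
    fix k assume k: "\<bar>y k\<bar> > s"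
    show "d \<le> \<bar>y k\<bar>"
    proof (rule ccontr)
      assume "\<not> d \<le> \<bar>y k\<bar>"
      then have "\<bar>y k\<bar> \<in> V" using k \<open>d/2 \<le> s\<close> by (auto simp: V_def F_def)
      then have "\<bar>y k\<bar> \<le> s" unfolding s_def by (rule Max_ge[OF V(1)])
      then show False using k by simp
    qed
  qed (use \<open>s < d\<close> in simp)
  have "s \<notin> rearr_levels y n" using dec_rearr_le \<open>s < d\<close> d_def by fastforce
  moreover have "finite {k. \<bar>y k\<bar> > s}"
    using finite_abs_gt_of_tendsto_zero[OF y, of s] \<open>d/2 \<le> s\<close> \<open>d > 0\<close> by simp
  ultimately show ?thesis
    using \<open>d/2 \<le> s\<close> \<open>d > 0\<close> by (auto simp: rearr_levels_def eq d_def)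
qed

lemma ex_abs_ge_dec_rearr_outside:
  assumes y: "y \<longlonglongrightarrow> 0" and S: "finite S" "card S \<le> n"
  shows "\<exists>k. k \<notin> S \<and> dec_rearr y n \<le> \<bar>y k\<bar>"
proof (cases "dec_rearr y n > 0")
  case True
  have "\<not> {k. dec_rearr y n \<le> \<bar>y k\<bar>} \<subseteq> S"
  proof
    assume "{k. dec_rearr y n \<le> \<bar>y k\<bar>} \<subseteq> S"
    then have "card {k. dec_rearr y n \<le> \<bar>y k\<bar>} \<le> card S" by (rule card_mono[OF S(1)])
    then show False using less_card_abs_ge_dec_rearr[OF y True] S(2) by linarith
  qed
  then show ?thesis by blast
next
  case False
  moreover obtain k where "k \<notin> S" using S(1) ex_new_if_finite[OF infinite_UNIV_nat] by blast
  ultimately show ?thesis by auto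
qed

lemma sum_dec_rearr_powr_le:
  assumes "y \<longlonglongrightarrow> 0" "0 \<le> p"
  shows "\<exists>S. finite S \<and> card S = N \<and> (\<forall>k\<in>S. dec_rearr y N \<le> \<bar>y k\<bar>) \<and>
     (\<Sum>n<N. dec_rearr y n powr p) \<le> (\<Sum>k\<in>S. \<bar>y k\<bar> powr p)"
proof (induction N)
  case 0
  show ?case by (intro exI[of _ "{}"]) simp
next
  case (Suc N)
  have bs: "Bseq y" using assms(1) by (intro convergent_imp_Bseq convergentI)
  from Suc obtain S where S: "finite S" "card S = N" "\<forall>k\<in>S. dec_rearr y N \<le> \<bar>y k\<bar>"
    "(\<Sum>n<N. dec_rearr y n powr p) \<le> (\<Sum>k\<in>S. \<bar>y k\<bar> powr p)" by blast
  obtain k where k: "k \<notin> S" "dec_rearr y N \<le> \<bar>y k\<bar>"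
    using ex_abs_ge_dec_rearr_outside[OF assms(1) S(1)] S(2) by auto
  have "dec_rearr y N powr p \<le> \<bar>y k\<bar> powr p"
    by (rule powr_mono2[OF assms(2) dec_rearr_nonneg[OF bs] k(2)])
  then have "(\<Sum>n<Suc N. dec_rearr y n powr p) \<le> (\<Sum>k\<in>insert k S. \<bar>y k\<bar> powr p)"
    using S(4) S(1) k(1) by simp
  moreover have "\<forall>k'\<in>insert k S. dec_rearr y (Suc N) \<le> \<bar>y k'\<bar>"
    using S(3) k dec_rearr_Suc_le[OF bs, of N] by auto
  ultimately show ?case using S k by (intro exI[of _ "insert k S"]) auto
qed

section \<open>Lorentz and l_p sequence spaces\<close>

lemma lp_space_tendsto_zero:
  assumes "0 < p" "y \<in> lp_space p" shows "y \<longlonglongrightarrow> 0"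
proof -
  have "(\<lambda>n. \<bar>y n\<bar> powr p) \<longlonglongrightarrow> 0"
    using assms(2) by (simp add: lp_space_def summable_LIMSEQ_zero)
  then have "(\<lambda>n. (\<bar>y n\<bar> powr p) powr (1/p)) \<longlonglongrightarrow> 0"
    by (rule tendsto_zero_powrI[where b="1/p"]) (use assms(1) in auto)
  then have "(\<lambda>n. \<bar>y n\<bar>) \<longlonglongrightarrow> 0" using assms(1) by (simp add: powr_powr)
  then show ?thesis by (simp add: tendsto_rabs_zero_iff)
qed

lemma lp_space_into_lorentz_space:
  assumes p: "0 < p" and w: "\<And>n. 0 \<le> w n" "\<And>n. w n \<le> 1" and y: "y \<in> lp_space p"
  shows "y \<in> lorentz_space w p \<and> lorentz_norm w p y \<le> lp_norm p y"
proof -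
  have sy: "summable (\<lambda>n. \<bar>y n\<bar> powr p)" using y by (simp add: lp_space_def)
  have y0: "y \<longlonglongrightarrow> 0" by (rule lp_space_tendsto_zero[OF p y])
  define P where "P = (\<Sum>n. \<bar>y n\<bar> powr p)"
  have partial: "(\<Sum>n<N. dec_rearr y n powr p) \<le> P" for N
  proof -
    obtain S where S: "finite S" "(\<Sum>n<N. dec_rearr y n powr p) \<le> (\<Sum>k\<in>S. \<bar>y k\<bar> powr p)"
      using sum_dec_rearr_powr_le[OF y0, of p N] p by auto
    moreover have "(\<Sum>k\<in>S. \<bar>y k\<bar> powr p) \<le> P"
      unfolding P_def by (rule sum_le_suminf[OF sy S(1)]) auto
    ultimately show ?thesis by simp
  qed
  have sd: "summable (\<lambda>n. dec_rearr y n powr p)"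
    by (rule bounded_imp_summable[where B=P])
      (use partial in \<open>auto simp: lessThan_Suc_atMost[symmetric] simp del: sum.lessThan_Suc\<close>)
  have term_le: "w n * dec_rearr y n powr p \<le> dec_rearr y n powr p" for n
    by (rule mult_left_le_one_le[OF powr_ge_zero w])
  have sw: "summable (\<lambda>n. w n * dec_rearr y n powr p)"
    by (rule summable_comparison_test'[OF sd]) (use term_le w(1) in simp)
  have "(\<Sum>n. w n * dec_rearr y n powr p) \<le> (\<Sum>n. dec_rearr y n powr p)"
    by (rule suminf_le[OF term_le sw sd])
  also have "\<dots> \<le> P" by (rule suminf_le_const[OF sd partial])
  finally have "lorentz_norm w p y \<le> lp_norm p y"
    unfolding lorentz_norm_def lp_norm_def P_def using p w(1)
    by (intro powr_mono2 suminf_nonneg[OF sw]) auto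
  then show ?thesis using y0 sw by (simp add: lorentz_space_def)
qed

lemma lorentz_norm_nonneg: "0 \<le> lorentz_norm w p x"
  by (simp add: lorentz_norm_def)

lemma zero_in_lorentz_space: "(\<lambda>n. 0) \<in> lorentz_space w p"
  by (simp add: lorentz_space_def dec_rearr_zero)

lemma zero_in_lp_space: "(\<lambda>n. 0) \<in> lp_space p"
  by (simp add: lp_space_def)

lemma lorentz_space_Bseq: "x \<in> lorentz_space w p \<Longrightarrow> Bseq x"
  by (auto simp: lorentz_space_def intro: convergent_imp_Bseq convergentI)

lemma lorentz_space_subseq:
  assumes p: "0 \<le> p" and w: "\<And>n. 0 \<le> w n" and x: "x \<in> lorentz_space w p"
    and g: "strict_mono g"
  shows "(\<lambda>k. x (g k)) \<in> lorentz_space w p \<and> lorentz_norm w p (\<lambda>k. x (g k)) \<le> lorentz_norm w p x"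
proof -
  have bs: "Bseq x" using x by (rule lorentz_space_Bseq)
  have x0: "x \<longlonglongrightarrow> 0" and sx: "summable (\<lambda>n. w n * dec_rearr x n powr p)"
    using x by (auto simp: lorentz_space_def)
  have le: "w n * dec_rearr (\<lambda>k. x (g k)) n powr p \<le> w n * dec_rearr x n powr p" for n
  proof -
    have "dec_rearr (\<lambda>k. x (g k)) n \<le> dec_rearr x n"
      by (rule dec_rearr_reindex_le[OF bs strict_mono_imp_inj_on[OF g]])
    then have "dec_rearr (\<lambda>k. x (g k)) n powr p \<le> dec_rearr x n powr p"
      by (rule powr_mono2[OF p dec_rearr_nonneg[OF Bseq_subseq[OF bs]]])
    then show ?thesis by (rule mult_left_mono[OF _ w])
  qed
  have nonneg: "0 \<le> w n * dec_rearr (\<lambda>k. x (g k)) n powr p" for n using w[of n] by simp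
  have s: "summable (\<lambda>n. w n * dec_rearr (\<lambda>k. x (g k)) n powr p)"
    by (rule summable_comparison_test'[OF sx]) (use le nonneg in simp)
  have "(\<Sum>n. w n * dec_rearr (\<lambda>k. x (g k)) n powr p) \<le> (\<Sum>n. w n * dec_rearr x n powr p)"
    by (rule suminf_le[OF le s sx])
  then have "lorentz_norm w p (\<lambda>k. x (g k)) \<le> lorentz_norm w p x"
    unfolding lorentz_norm_def using p by (intro powr_mono2 suminf_nonneg[OF s] nonneg) auto
  moreover have "(\<lambda>k. x (g k)) \<longlonglongrightarrow> 0"
    using LIMSEQ_subseq_LIMSEQ[OF x0 g] by (simp add: comp_def)
  ultimately show ?thesis using s by (simp add: lorentz_space_def)
qed

lemma lorentz_space_cmult:
  assumes p: "0 \<le> p" and w: "\<And>n. 0 \<le> w n" and x: "x \<in> lorentz_space w p"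
  shows "(\<lambda>k. c * x k) \<in> lorentz_space w p"
proof -
  have x0: "x \<longlonglongrightarrow> 0" and sx: "summable (\<lambda>n. w n * dec_rearr x n powr p)"
    using x by (auto simp: lorentz_space_def)
  have cx0: "(\<lambda>k. c * x k) \<longlonglongrightarrow> 0" using x0 by (rule tendsto_mult_right_zero)
  have bx: "Bseq x" and bcx: "Bseq (\<lambda>k. c * x k)"
    using x0 cx0 by (auto intro: convergent_imp_Bseq convergentI)
  have le: "w n * dec_rearr (\<lambda>k. c * x k) n powr p \<le> \<bar>c\<bar> powr p * (w n * dec_rearr x n powr p)" for n
  proof -
    have "dec_rearr (\<lambda>k. c * x k) n powr p \<le> (\<bar>c\<bar> * dec_rearr x n) powr p"
      by (intro powr_mono2 p dec_rearr_nonneg[OF bcx] dec_rearr_cmult_le[OF bx])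
    also have "\<dots> = \<bar>c\<bar> powr p * dec_rearr x n powr p" by (rule powr_mult)
    finally show ?thesis using w[of n] by (simp add: mult_left_mono algebra_simps)
  qed
  have s: "summable (\<lambda>n. w n * dec_rearr (\<lambda>k. c * x k) n powr p)"
    by (rule summable_comparison_test'[OF summable_mult[OF sx]]) (use le w in simp)
  then show ?thesis using cx0 by (simp add: lorentz_space_def)
qed

lemma sums_comp_div2:
  fixes G :: "nat \<Rightarrow> real" assumes "summable G"
  shows "(\<lambda>m. G (m div 2)) sums (suminf G + suminf G)"
proof -
  have "(\<lambda>n. if even n then G (n div 2) else G ((n - 1) div 2)) sums (suminf G + suminf G)"
    by (rule sums_if) (use assms in \<open>simp_all add: summable_sums\<close>)
  moreover have "(\<lambda>n. if even n then G (n div 2) else G ((n - 1) div 2)) = (\<lambda>m. G (m div 2))"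
    by (rule ext) (auto elim: oddE)
  ultimately show ?thesis by simp
qed

lemma powr_add_le_two_powr:
  fixes a b p :: real assumes "0 \<le> a" "0 \<le> b" "0 \<le> p"
  shows "(a + b) powr p \<le> 2 powr p * (a powr p + b powr p)"
proof -
  have "(a + b) powr p \<le> (2 * max a b) powr p" using assms by (intro powr_mono2) auto
  also have "\<dots> = 2 powr p * max a b powr p" by (rule powr_mult)
  also have "\<dots> \<le> 2 powr p * (a powr p + b powr p)"
    by (cases "a \<le> b") (auto simp: max_def)
  finally show ?thesis .
qed

lemma powr_inverse_add_le:
  fixes a b p :: real assumes "0 \<le> a" "0 \<le> b" "1 \<le> p"
  shows "(a + b) powr (1/p) \<le> 2 * (a powr (1/p) + b powr (1/p))"
proof -
  have "(a + b) powr (1/p) \<le> 2 powr (1/p) * (a powr (1/p) + b powr (1/p))"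
    using assms by (intro powr_add_le_two_powr) auto
  also have "\<dots> \<le> 2 * (a powr (1/p) + b powr (1/p))"
  proof (rule mult_right_mono)
    show "2 powr (1/p) \<le> 2" using powr_mono[of "1/p" 1 2] assms by simp
  qed simp
  finally show ?thesis .
qed

lemma Bseq_plus:
  fixes f g :: "nat \<Rightarrow> 'a::real_normed_vector"
  assumes "Bseq f" "Bseq g" shows "Bseq (\<lambda>n. f n + g n)"
proof -
  obtain K1 K2 where "\<And>n. norm (f n) \<le> K1" "\<And>n. norm (g n) \<le> K2"
    using assms by (meson BseqE)
  then show ?thesis
    by (intro BseqI'[where K = "K1 + K2"]) (meson add_mono norm_triangle_ineq order.trans)
qed

lemma lorentz_term_add_le:
  assumes p: "0 \<le> p" and w: "\<And>n. 0 \<le> w n" and dw: "decseq w" and x: "Bseq x" and y: "Bseq y"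
  shows "w m * dec_rearr (\<lambda>k. x k + y k) m powr p
    \<le> 2 powr p * (w (m div 2) * dec_rearr x (m div 2) powr p + w (m div 2) * dec_rearr y (m div 2) powr p)"
proof -
  let ?k = "m div 2"
  have h: "Bseq (\<lambda>k. x k + y k)" by (rule Bseq_plus[OF x y])
  have "dec_rearr (\<lambda>k. x k + y k) m \<le> dec_rearr (\<lambda>k. x k + y k) (2 * ?k)"
    by (rule dec_rearr_antimono[OF h]) simp
  also have "\<dots> \<le> dec_rearr x ?k + dec_rearr y ?k" by (rule dec_rearr_add_le[OF x y])
  finally have "dec_rearr (\<lambda>k. x k + y k) m powr p \<le> (dec_rearr x ?k + dec_rearr y ?k) powr p"
    by (intro powr_mono2 p dec_rearr_nonneg[OF h])
  also have "\<dots> \<le> 2 powr p * (dec_rearr x ?k powr p + dec_rearr y ?k powr p)"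
    by (intro powr_add_le_two_powr p dec_rearr_nonneg x y)
  finally have "w m * dec_rearr (\<lambda>k. x k + y k) m powr p
      \<le> w ?k * (2 powr p * (dec_rearr x ?k powr p + dec_rearr y ?k powr p))"
    using w dw by (intro mult_mono) (auto simp: decseq_def)
  then show ?thesis by (simp add: algebra_simps)
qed

lemma lorentz_space_add:
  assumes p: "1 \<le> p" and w: "\<And>n. 0 \<le> w n" and dw: "decseq w"
    and x: "x \<in> lorentz_space w p" and y: "y \<in> lorentz_space w p"
  shows "(\<lambda>k. x k + y k) \<in> lorentz_space w p \<and> lorentz_norm w p (\<lambda>k. x k + y k)
    \<le> (2 powr (p + 1)) powr (1/p) * 2 * (lorentz_norm w p x + lorentz_norm w p y)"
proof -
  define h where "h = (\<lambda>k. x k + y k)"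
  define X where "X = (\<lambda>n. w n * dec_rearr x n powr p)"
  define Y where "Y = (\<lambda>n. w n * dec_rearr y n powr p)"
  have x0: "x \<longlonglongrightarrow> 0" and sX: "summable X" and y0: "y \<longlonglongrightarrow> 0" and sY: "summable Y"
    using x y by (auto simp: lorentz_space_def X_def Y_def)
  have X0: "0 \<le> suminf X" by (rule suminf_nonneg[OF sX]) (simp add: X_def w)
  have Y0: "0 \<le> suminf Y" by (rule suminf_nonneg[OF sY]) (simp add: Y_def w)
  have h0: "h \<longlonglongrightarrow> 0" unfolding h_def using tendsto_add[OF x0 y0] by simp
  define F where "F = (\<lambda>n. 2 powr p * (X n + Y n))"
  have sF: "summable F" unfolding F_def by (intro summable_mult summable_add sX sY)
  have term_le: "w m * dec_rearr h m powr p \<le> F (m div 2)" for m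
    unfolding h_def F_def X_def Y_def using p w dw lorentz_space_Bseq[OF x] lorentz_space_Bseq[OF y]
    by (intro lorentz_term_add_le) auto
  have sF2: "(\<lambda>m. F (m div 2)) sums (suminf F + suminf F)" by (rule sums_comp_div2[OF sF])
  have sh: "summable (\<lambda>m. w m * dec_rearr h m powr p)"
    by (rule summable_comparison_test'[OF sums_summable[OF sF2]]) (use term_le w in simp)
  have "(\<Sum>m. w m * dec_rearr h m powr p) \<le> suminf F + suminf F"
    using suminf_le[OF term_le sh sums_summable[OF sF2]] sums_unique[OF sF2] by simp
  also have "\<dots> = 2 powr (p + 1) * (suminf X + suminf Y)"
    unfolding F_def by (simp add: suminf_mult suminf_add[OF sX sY] summable_add[OF sX sY] powr_add)
  finally have "lorentz_norm w p h \<le> (2 powr (p + 1) * (suminf X + suminf Y)) powr (1/p)"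
    unfolding lorentz_norm_def using p w by (intro powr_mono2 suminf_nonneg[OF sh]) auto
  also have "\<dots> = (2 powr (p + 1)) powr (1/p) * (suminf X + suminf Y) powr (1/p)"
    by (rule powr_mult)
  also have "\<dots> \<le> (2 powr (p + 1)) powr (1/p) * (2 * (lorentz_norm w p x + lorentz_norm w p y))"
    unfolding lorentz_norm_def X_def[symmetric] Y_def[symmetric]
    by (intro mult_left_mono powr_inverse_add_le X0 Y0 p) simp
  finally show ?thesis using h0 sh unfolding h_def by (simp add: lorentz_space_def mult.assoc)
qed

definition interleave :: "(nat \<Rightarrow> 'a) \<Rightarrow> (nat \<Rightarrow> 'a) \<Rightarrow> nat \<Rightarrow> 'a" where
  "interleave u v n = (if even n then u (n div 2) else v (n div 2))"

lemma interleave_even [simp]: "interleave u v (2 * k) = u k"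
  and interleave_odd [simp]: "interleave u v (Suc (2 * k)) = v k"
  by (simp_all add: interleave_def)

lemma lp_space_interleave:
  assumes p: "1 \<le> p" and u: "u \<in> lp_space p" and v: "v \<in> lp_space p"
  shows "interleave u v \<in> lp_space p \<and> lp_norm p (interleave u v) \<le> 2 * (lp_norm p u + lp_norm p v)"
proof -
  have su: "summable (\<lambda>n. \<bar>u n\<bar> powr p)" and sv: "summable (\<lambda>n. \<bar>v n\<bar> powr p)"
    using u v by (auto simp: lp_space_def)
  have "(\<lambda>n. if even n then \<bar>u (n div 2)\<bar> powr p else \<bar>v ((n - 1) div 2)\<bar> powr p) sums
        ((\<Sum>n. \<bar>v n\<bar> powr p) + (\<Sum>n. \<bar>u n\<bar> powr p))"
    by (rule sums_if) (use su sv in \<open>simp_all add: summable_sums\<close>)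
  moreover have "(\<lambda>n. if even n then \<bar>u (n div 2)\<bar> powr p else \<bar>v ((n - 1) div 2)\<bar> powr p)
      = (\<lambda>n. \<bar>interleave u v n\<bar> powr p)"
    by (rule ext) (auto simp: interleave_def elim: oddE)
  ultimately have s: "(\<lambda>n. \<bar>interleave u v n\<bar> powr p) sums ((\<Sum>n. \<bar>u n\<bar> powr p) + (\<Sum>n. \<bar>v n\<bar> powr p))"
    by (simp add: add.commute)
  have "lp_norm p (interleave u v) = ((\<Sum>n. \<bar>u n\<bar> powr p) + (\<Sum>n. \<bar>v n\<bar> powr p)) powr (1/p)"
    unfolding lp_norm_def using sums_unique[OF s] by simp
  also have "\<dots> \<le> 2 * (lp_norm p u + lp_norm p v)"
    unfolding lp_norm_def by (intro powr_inverse_add_le p suminf_nonneg su sv) auto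
  finally show ?thesis using sums_summable[OF s] by (simp add: lp_space_def)
qed

lemma lp_space_cmult:
  assumes p: "0 < p" and u: "u \<in> lp_space p"
  shows "(\<lambda>n. c * u n) \<in> lp_space p \<and> lp_norm p (\<lambda>n. c * u n) \<le> \<bar>c\<bar> * lp_norm p u"
proof -
  have su: "summable (\<lambda>n. \<bar>u n\<bar> powr p)" using u by (auto simp: lp_space_def)
  have eq: "(\<lambda>n. \<bar>c * u n\<bar> powr p) = (\<lambda>n. \<bar>c\<bar> powr p * \<bar>u n\<bar> powr p)"
    by (simp add: abs_mult powr_mult)
  have "lp_norm p (\<lambda>n. c * u n) = (\<bar>c\<bar> powr p * (\<Sum>n. \<bar>u n\<bar> powr p)) powr (1/p)"
    unfolding lp_norm_def eq using suminf_mult[OF su] by simp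
  also have "\<dots> = (\<bar>c\<bar> powr p) powr (1/p) * (\<Sum>n. \<bar>u n\<bar> powr p) powr (1/p)" by (rule powr_mult)
  also have "\<dots> = \<bar>c\<bar> * lp_norm p u" using p by (simp add: powr_powr lp_norm_def)
  finally show ?thesis using summable_mult[OF su] eq by (simp add: lp_space_def)
qed

section \<open>Bounded operators\<close>

lemma bounded_opsI:
  assumes "\<And>x. x \<in> D1 \<Longrightarrow> T x \<in> D2"
    "\<And>x y. x \<in> D1 \<Longrightarrow> y \<in> D1 \<Longrightarrow> T (\<lambda>n. x n + y n) = (\<lambda>n. T x n + T y n)"
    "\<And>c x. x \<in> D1 \<Longrightarrow> T (\<lambda>n. c * x n) = (\<lambda>n. c * T x n)"
    "\<And>x. x \<in> D1 \<Longrightarrow> N2 (T x) \<le> C * N1 x"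
    "\<And>x. x \<notin> D1 \<Longrightarrow> T x = (\<lambda>n. 0)"
  shows "T \<in> bounded_ops D1 N1 D2 N2"
  using assms unfolding bounded_ops_def by blast

lemma bounded_ops_in: "T \<in> bounded_ops D1 N1 D2 N2 \<Longrightarrow> x \<in> D1 \<Longrightarrow> T x \<in> D2"
  and bounded_ops_add:
    "T \<in> bounded_ops D1 N1 D2 N2 \<Longrightarrow> x \<in> D1 \<Longrightarrow> y \<in> D1 \<Longrightarrow> T (\<lambda>n. x n + y n) = (\<lambda>n. T x n + T y n)"
  and bounded_ops_cmult:
    "T \<in> bounded_ops D1 N1 D2 N2 \<Longrightarrow> x \<in> D1 \<Longrightarrow> T (\<lambda>n. c * x n) = (\<lambda>n. c * T x n)"
  and bounded_ops_outside: "T \<in> bounded_ops D1 N1 D2 N2 \<Longrightarrow> x \<notin> D1 \<Longrightarrow> T x = (\<lambda>n. 0)"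
  unfolding bounded_ops_def by blast+

lemma bounded_ops_zero:
  assumes "T \<in> bounded_ops D1 N1 D2 N2" "(\<lambda>n. 0) \<in> D1" shows "T (\<lambda>n. 0) = (\<lambda>n. 0)"
  using bounded_ops_cmult[OF assms, of 0] by simp

lemma bounded_ops_in_UNIV:
  assumes "T \<in> bounded_ops D1 N1 D2 N2" "(\<lambda>n. 0) \<in> D2" shows "T z \<in> D2"
  using assms bounded_ops_in bounded_ops_outside by (cases "z \<in> D1") fastforce+

lemma bounded_ops_boundE:
  assumes "T \<in> bounded_ops D1 N1 D2 N2" "\<And>x. 0 \<le> N1 x"
  obtains C where "C \<ge> 0" "\<And>x. x \<in> D1 \<Longrightarrow> N2 (T x) \<le> C * N1 x"
proof -
  obtain C where C: "\<And>x. x \<in> D1 \<Longrightarrow> N2 (T x) \<le> C * N1 x"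
    using assms(1) unfolding bounded_ops_def by blast
  have "N2 (T x) \<le> max C 0 * N1 x" if "x \<in> D1" for x
    using C[OF that] mult_right_mono[OF max.cobounded1[of C 0] assms(2)[of x]] by linarith
  then show ?thesis using that[of "max C 0"] by auto
qed

lemma bounded_ops_comp:
  assumes T1: "T1 \<in> bounded_ops D1 N1 D2 N2" and T2: "T2 \<in> bounded_ops D2 N2 D3 N3"
    and zero: "(\<lambda>n. 0) \<in> D2" and N1: "\<And>x. 0 \<le> N1 x" and N2: "\<And>x. 0 \<le> N2 x"
  shows "(\<lambda>x. T2 (T1 x)) \<in> bounded_ops D1 N1 D3 N3"
proof -
  obtain C1 where C1: "C1 \<ge> 0" "\<And>x. x \<in> D1 \<Longrightarrow> N2 (T1 x) \<le> C1 * N1 x"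
    using bounded_ops_boundE[OF T1 N1] by blast
  obtain C2 where C2: "C2 \<ge> 0" "\<And>x. x \<in> D2 \<Longrightarrow> N3 (T2 x) \<le> C2 * N2 x"
    using bounded_ops_boundE[OF T2 N2] by blast
  show ?thesis
  proof (rule bounded_opsI[where C = "C2 * C1"])
    fix x assume x: "x \<in> D1"
    have T1x: "T1 x \<in> D2" by (rule bounded_ops_in[OF T1 x])
    show "T2 (T1 x) \<in> D3" by (rule bounded_ops_in[OF T2 T1x])
    have "N3 (T2 (T1 x)) \<le> C2 * N2 (T1 x)" by (rule C2(2)[OF T1x])
    also have "\<dots> \<le> C2 * (C1 * N1 x)" by (rule mult_left_mono[OF C1(2)[OF x] C2(1)])
    finally show "N3 (T2 (T1 x)) \<le> C2 * C1 * N1 x" by (simp add: mult.assoc)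
    fix c show "T2 (T1 (\<lambda>n. c * x n)) = (\<lambda>n. c * T2 (T1 x) n)"
      using bounded_ops_cmult[OF T1 x] bounded_ops_cmult[OF T2 T1x] by simp
    fix y assume y: "y \<in> D1"
    show "T2 (T1 (\<lambda>n. x n + y n)) = (\<lambda>n. T2 (T1 x) n + T2 (T1 y) n)"
      using bounded_ops_add[OF T1 x y] bounded_ops_add[OF T2 T1x bounded_ops_in[OF T1 y]] by simp
  next
    fix x assume "x \<notin> D1"
    then show "T2 (T1 x) = (\<lambda>n. 0)" using bounded_ops_outside[OF T1] bounded_ops_zero[OF T2 zero] by simp
  qed
qed

lemma zero_op_in_bounded_ops:
  assumes "(\<lambda>n. 0) \<in> D2" "N2 (\<lambda>n. 0) = 0" shows "(\<lambda>x n. 0) \<in> bounded_ops D1 N1 D2 N2"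
  by (rule bounded_opsI[where C = 0]) (use assms in auto)

lemma cmult_op_in_bounded_ops:
  assumes T: "T \<in> bounded_ops D1 N1 D2 N2" and N1: "\<And>x. 0 \<le> N1 x"
    and D2: "\<And>y. y \<in> D2 \<Longrightarrow> (\<lambda>n. c * y n) \<in> D2 \<and> N2 (\<lambda>n. c * y n) \<le> \<bar>c\<bar> * N2 y"
  shows "(\<lambda>x n. c * T x n) \<in> bounded_ops D1 N1 D2 N2"
proof -
  obtain C where C: "C \<ge> 0" "\<And>x. x \<in> D1 \<Longrightarrow> N2 (T x) \<le> C * N1 x"
    using bounded_ops_boundE[OF T N1] by blast
  show ?thesis
  proof (rule bounded_opsI[where C = "\<bar>c\<bar> * C"])
    fix x assume x: "x \<in> D1"
    have Tx: "T x \<in> D2" by (rule bounded_ops_in[OF T x])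
    show "(\<lambda>n. c * T x n) \<in> D2" using D2[OF Tx] by blast
    have "N2 (\<lambda>n. c * T x n) \<le> \<bar>c\<bar> * N2 (T x)" using D2[OF Tx] by blast
    also have "\<dots> \<le> \<bar>c\<bar> * (C * N1 x)" by (intro mult_left_mono C x) simp
    finally show "N2 (\<lambda>n. c * T x n) \<le> \<bar>c\<bar> * C * N1 x" by (simp add: mult.assoc)
    fix d show "(\<lambda>n. c * T (\<lambda>n. d * x n) n) = (\<lambda>n. d * (c * T x n))"
      using bounded_ops_cmult[OF T x] by (simp add: algebra_simps)
    fix y assume y: "y \<in> D1"
    show "(\<lambda>n. c * T (\<lambda>n. x n + y n) n) = (\<lambda>n. c * T x n + c * T y n)"
      using bounded_ops_add[OF T x y] by (simp add: algebra_simps)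
  qed (use bounded_ops_outside[OF T] in simp)
qed

lemma interleave_op_in_bounded_ops:
  assumes p: "1 \<le> p" and N1: "\<And>x. 0 \<le> N1 x"
    and B1: "B1 \<in> bounded_ops D1 N1 (lp_space p) (lp_norm p)"
    and B2: "B2 \<in> bounded_ops D1 N1 (lp_space p) (lp_norm p)"
  shows "(\<lambda>x. interleave (B1 x) (B2 x)) \<in> bounded_ops D1 N1 (lp_space p) (lp_norm p)"
proof -
  obtain C1 where C1: "C1 \<ge> 0" "\<And>x. x \<in> D1 \<Longrightarrow> lp_norm p (B1 x) \<le> C1 * N1 x"
    using bounded_ops_boundE[OF B1 N1] by blast
  obtain C2 where C2: "C2 \<ge> 0" "\<And>x. x \<in> D1 \<Longrightarrow> lp_norm p (B2 x) \<le> C2 * N1 x"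
    using bounded_ops_boundE[OF B2 N1] by blast
  show ?thesis
  proof (rule bounded_opsI[where C = "2 * (C1 + C2)"])
    fix x assume x: "x \<in> D1"
    note il = lp_space_interleave[OF p bounded_ops_in[OF B1 x] bounded_ops_in[OF B2 x]]
    show "interleave (B1 x) (B2 x) \<in> lp_space p" using il by blast
    have "lp_norm p (interleave (B1 x) (B2 x)) \<le> 2 * (lp_norm p (B1 x) + lp_norm p (B2 x))"
      using il by blast
    also have "\<dots> \<le> 2 * (C1 * N1 x + C2 * N1 x)" using C1(2)[OF x] C2(2)[OF x] by simp
    finally show "lp_norm p (interleave (B1 x) (B2 x)) \<le> 2 * (C1 + C2) * N1 x"
      by (simp add: algebra_simps)
    fix c show "interleave (B1 (\<lambda>n. c * x n)) (B2 (\<lambda>n. c * x n)) = (\<lambda>n. c * interleave (B1 x) (B2 x) n)"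
      using bounded_ops_cmult[OF B1 x] bounded_ops_cmult[OF B2 x] by (auto simp: interleave_def)
    fix y assume y: "y \<in> D1"
    show "interleave (B1 (\<lambda>n. x n + y n)) (B2 (\<lambda>n. x n + y n))
        = (\<lambda>n. interleave (B1 x) (B2 x) n + interleave (B1 y) (B2 y) n)"
      using bounded_ops_add[OF B1 x y] bounded_ops_add[OF B2 x y] by (auto simp: interleave_def)
  next
    fix x assume "x \<notin> D1"
    then show "interleave (B1 x) (B2 x) = (\<lambda>n. 0)"
      using bounded_ops_outside[OF B1] bounded_ops_outside[OF B2] by (auto simp: interleave_def)
  qed
qed

section \<open>The ideal J^j\<close>

lemma formal_identity_bounded_op:
  assumes "B \<in> bounded_ops D N (lp_space p) N'" shows "formal_identity p (B x) = B x"
  using bounded_ops_in_UNIV[OF assms zero_in_lp_space] by (simp add: formal_identity_def)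

lemma J_j_iff:
  "T \<in> J_j w p \<longleftrightarrow> (\<exists>A B.
      A \<in> bounded_ops (lorentz_space w p) (lorentz_norm w p) (lorentz_space w p) (lorentz_norm w p) \<and>
      B \<in> bounded_ops (lorentz_space w p) (lorentz_norm w p) (lp_space p) (lp_norm p) \<and>
      T = (\<lambda>x. A (B x)))"
  unfolding J_j_def by (simp add: formal_identity_bounded_op cong: conj_cong)

context
  fixes w :: "nat \<Rightarrow> real" and p :: real
  assumes p: "1 \<le> p" and w_nonneg: "\<And>n. 0 \<le> w n" and w_le_1: "\<And>n. w n \<le> 1"
    and w_decseq: "decseq w"
begin

abbreviation "lorentz_ops \<equiv> bounded_ops (lorentz_space w p) (lorentz_norm w p) (lorentz_space w p) (lorentz_norm w p)"
abbreviation "lorentz_lp_ops \<equiv> bounded_ops (lorentz_space w p) (lorentz_norm w p) (lp_space p) (lp_norm p)"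

lemma lp_space_into_lorentz_space':
  "y \<in> lp_space p \<Longrightarrow> y \<in> lorentz_space w p \<and> lorentz_norm w p y \<le> lp_norm p y"
  using p by (intro lp_space_into_lorentz_space w_nonneg w_le_1) auto

lemma lp_ops_into_lorentz_ops:
  assumes B: "B \<in> lorentz_lp_ops" shows "B \<in> lorentz_ops"
proof -
  obtain C where C: "\<And>x. x \<in> lorentz_space w p \<Longrightarrow> lp_norm p (B x) \<le> C * lorentz_norm w p x"
    using bounded_ops_boundE[OF B lorentz_norm_nonneg] by blast
  show ?thesis
  proof (rule bounded_opsI[where C = C])
    fix x assume x: "x \<in> lorentz_space w p"
    note Bx = lp_space_into_lorentz_space'[OF bounded_ops_in[OF B x]]
    show "B x \<in> lorentz_space w p" using Bx by blast
    show "lorentz_norm w p (B x) \<le> C * lorentz_norm w p x" using Bx C[OF x] by linarith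
  qed (use bounded_ops_add[OF B] bounded_ops_cmult[OF B] bounded_ops_outside[OF B] in auto)
qed

lemma J_j_subset:
  assumes "T \<in> J_j w p" shows "T \<in> lorentz_ops"
proof -
  obtain A B where A: "A \<in> lorentz_ops" and B: "B \<in> lorentz_lp_ops" and T: "T = (\<lambda>x. A (B x))"
    using assms unfolding J_j_iff by blast
  show ?thesis unfolding T
    by (rule bounded_ops_comp[OF lp_ops_into_lorentz_ops[OF B] A zero_in_lorentz_space
          lorentz_norm_nonneg lorentz_norm_nonneg])
qed

lemma zero_in_J_j: "(\<lambda>x n. 0) \<in> J_j w p"
proof -
  have "(\<lambda>x n. 0) \<in> lorentz_ops"
    by (rule zero_op_in_bounded_ops[OF zero_in_lorentz_space]) (simp add: lorentz_norm_def dec_rearr_zero)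
  moreover have "(\<lambda>x n. 0) \<in> lorentz_lp_ops"
    by (rule zero_op_in_bounded_ops[OF zero_in_lp_space]) (simp add: lp_norm_def)
  ultimately show ?thesis
    unfolding J_j_iff by (intro exI[of _ "\<lambda>x n. 0"]) simp
qed

lemma J_j_comp:
  assumes "T \<in> J_j w p" and A': "A' \<in> lorentz_ops" and B': "B' \<in> lorentz_ops"
  shows "(\<lambda>x. A' (T (B' x))) \<in> J_j w p"
proof -
  obtain A B where A: "A \<in> lorentz_ops" and B: "B \<in> lorentz_lp_ops" and T: "T = (\<lambda>x. A (B x))"
    using assms(1) unfolding J_j_iff by blast
  have "(\<lambda>x. A' (A x)) \<in> lorentz_ops"
    by (rule bounded_ops_comp[OF A A' zero_in_lorentz_space lorentz_norm_nonneg lorentz_norm_nonneg])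
  moreover have "(\<lambda>x. B (B' x)) \<in> lorentz_lp_ops"
    by (rule bounded_ops_comp[OF B' B zero_in_lorentz_space lorentz_norm_nonneg lorentz_norm_nonneg])
  ultimately show ?thesis unfolding J_j_iff T by blast
qed

lemma J_j_cmult:
  assumes "T \<in> J_j w p" shows "(\<lambda>x n. c * T x n) \<in> J_j w p"
proof -
  obtain A B where A: "A \<in> lorentz_ops" and B: "B \<in> lorentz_lp_ops" and T: "T = (\<lambda>x. A (B x))"
    using assms unfolding J_j_iff by blast
  have cB: "(\<lambda>x n. c * B x n) \<in> lorentz_lp_ops"
    using p by (intro cmult_op_in_bounded_ops[OF B lorentz_norm_nonneg] lp_space_cmult) auto
  have "B x \<in> lorentz_space w p" for x
    using lp_space_into_lorentz_space' bounded_ops_in_UNIV[OF B zero_in_lp_space] by blast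
  then have "(\<lambda>x n. c * T x n) = (\<lambda>x. A (\<lambda>n. c * B x n))"
    unfolding T using bounded_ops_cmult[OF A] by simp
  then show ?thesis unfolding J_j_iff using A cB by blast
qed

lemma lorentz_space_even_odd:
  assumes "z \<in> lorentz_space w p"
  shows "(\<lambda>k. z (2 * k)) \<in> lorentz_space w p" "lorentz_norm w p (\<lambda>k. z (2 * k)) \<le> lorentz_norm w p z"
    and "(\<lambda>k. z (2 * k + 1)) \<in> lorentz_space w p" "lorentz_norm w p (\<lambda>k. z (2 * k + 1)) \<le> lorentz_norm w p z"
  using lorentz_space_subseq[OF _ w_nonneg assms, of "\<lambda>k. 2 * k"]
    lorentz_space_subseq[OF _ w_nonneg assms, of "\<lambda>k. 2 * k + 1"] p
  by (auto simp: strict_mono_def)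

lemma deinterleave_op_in_lorentz_ops:
  assumes A1: "A1 \<in> lorentz_ops" and A2: "A2 \<in> lorentz_ops"
  shows "(\<lambda>z. if z \<in> lorentz_space w p then (\<lambda>n. A1 (\<lambda>k. z (2 * k)) n + A2 (\<lambda>k. z (2 * k + 1)) n)
    else (\<lambda>n. 0)) \<in> lorentz_ops" (is "?A \<in> lorentz_ops")
proof -
  let ?D = "lorentz_space w p" and ?N = "lorentz_norm w p"
  define K where "K = (2 powr (p + 1)) powr (1/p) * 2"
  have K: "0 \<le> K" by (simp add: K_def)
  obtain E1 where E1: "E1 \<ge> 0" "\<And>x. x \<in> ?D \<Longrightarrow> ?N (A1 x) \<le> E1 * ?N x"
    using bounded_ops_boundE[OF A1 lorentz_norm_nonneg] by blast
  obtain E2 where E2: "E2 \<ge> 0" "\<And>x. x \<in> ?D \<Longrightarrow> ?N (A2 x) \<le> E2 * ?N x"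
    using bounded_ops_boundE[OF A2 lorentz_norm_nonneg] by blast
  note add = lorentz_space_add[OF p w_nonneg w_decseq]
  show ?thesis
  proof (rule bounded_opsI[where C = "K * (E1 + E2)"])
    fix z assume z: "z \<in> ?D"
    note eo = lorentz_space_even_odd[OF z]
    note A12 = bounded_ops_in[OF A1 eo(1)] bounded_ops_in[OF A2 eo(3)]
    show "?A z \<in> ?D" using z add[OF A12] by simp
    have "?N (?A z) \<le> K * (?N (A1 (\<lambda>k. z (2 * k))) + ?N (A2 (\<lambda>k. z (2 * k + 1))))"
      using z add[OF A12] by (simp add: K_def)
    also have "\<dots> \<le> K * (E1 * ?N z + E2 * ?N z)"
      using E1(2)[OF eo(1)] E2(2)[OF eo(3)] mult_left_mono[OF eo(2) E1(1)] mult_left_mono[OF eo(4) E2(1)]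
      by (intro mult_left_mono K) linarith
    finally show "?N (?A z) \<le> K * (E1 + E2) * ?N z" by (simp add: algebra_simps)
    fix c
    show "?A (\<lambda>n. c * z n) = (\<lambda>n. c * ?A z n)"
      using z lorentz_space_cmult[OF _ w_nonneg z, of c] p
        bounded_ops_cmult[OF A1 eo(1), of c] bounded_ops_cmult[OF A2 eo(3), of c]
      by (simp add: algebra_simps)
    fix y assume y: "y \<in> ?D"
    note eo' = lorentz_space_even_odd[OF y]
    show "?A (\<lambda>n. z n + y n) = (\<lambda>n. ?A z n + ?A y n)"
      using z y add[OF z y] bounded_ops_add[OF A1 eo(1) eo'(1)] bounded_ops_add[OF A2 eo(3) eo'(3)]
      by (simp add: algebra_simps)
  qed simp
qed

lemma J_j_add:
  assumes S: "S \<in> J_j w p" and T: "T \<in> J_j w p"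
  shows "(\<lambda>x n. S x n + T x n) \<in> J_j w p"
proof -
  obtain A1 B1 where A1: "A1 \<in> lorentz_ops" and B1: "B1 \<in> lorentz_lp_ops" and S: "S = (\<lambda>x. A1 (B1 x))"
    using S unfolding J_j_iff by blast
  obtain A2 B2 where A2: "A2 \<in> lorentz_ops" and B2: "B2 \<in> lorentz_lp_ops" and T: "T = (\<lambda>x. A2 (B2 x))"
    using T unfolding J_j_iff by blast
  define B where "B = (\<lambda>x. interleave (B1 x) (B2 x))"
  define A where "A = (\<lambda>z. if z \<in> lorentz_space w p
    then (\<lambda>n. A1 (\<lambda>k. z (2 * k)) n + A2 (\<lambda>k. z (2 * k + 1)) n) else (\<lambda>n. 0))"
  have B_ops: "B \<in> lorentz_lp_ops"
    unfolding B_def using p by (intro interleave_op_in_bounded_ops lorentz_norm_nonneg B1 B2)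
  have A_ops: "A \<in> lorentz_ops" unfolding A_def by (rule deinterleave_op_in_lorentz_ops[OF A1 A2])
  have "B x \<in> lorentz_space w p" for x
    using lp_space_into_lorentz_space' bounded_ops_in_UNIV[OF B_ops zero_in_lp_space] by blast
  then have "(\<lambda>x n. S x n + T x n) = (\<lambda>x. A (B x))"
    by (simp add: A_def B_def S T)
  then show ?thesis unfolding J_j_iff using A_ops B_ops by blast
qed

end

theorem proposition4p1:
  fixes w :: "nat \<Rightarrow> real" and p :: real
  assumes "1 \<le> p" and "w 0 = 1" and "\<And>n. w n > 0" and "decseq w"
    and "w \<longlonglongrightarrow> 0" and "\<not> summable w"
  shows "is_operator_ideal (lorentz_space w p) (lorentz_norm w p) (J_j w p)"
proof -
  have w_nonneg: "\<And>n. 0 \<le> w n" using assms(3) less_imp_le by blast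
  have w_le_1: "\<And>n. w n \<le> 1" using assms(2,4) by (metis decseq_def zero_le)
  note weights = assms(1) w_nonneg w_le_1 assms(4)
  show ?thesis unfolding is_operator_ideal_def
    using J_j_subset[OF weights] zero_in_J_j[OF weights] J_j_add[OF weights]
      J_j_cmult[OF weights] J_j_comp[OF weights]
    by blast
qed

end
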